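(* Let $n_1,n_2\ge2$ and let $s$ be an integer with $1\le s\le n_2/2$. Then there exists a subset $\Omega\subset\{0,1\}^s_{n_1\times n_2}$ such that, for a numerical constant $C\ge 10^{-5}$, $$\log|\Omega|\ge C\,n_1\,s\,\log\Big(\frac{e\,n_2}{s}\Big),$$ and for any two distinct $A,A'\in\Omega$, $\ d_H(A,A')\ge \dfrac{n_1(s+1)}{16}$.
   Context: $\{0,1\}^s_{n_1\times n_2}$ denotes the set of all matrices $A=(a_{ij})\in\mathbb R^{n_1\times n_2}$ with $a_{ij}\in\{0,1\}$ such that each row of $A$ contains exactly $s$ ones. For $A=(a_{ij}),A'=(a'_{ij})$ in this set, the Hamming distance is $d_H(A,A')=\sum_{i=1}^{n_1}\sum_{j=1}^{n_2}\mathbb I(a_{ij}\ne a'_{ij})$. *)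

theory Defs
  imports Complex_Main
begin

text \<open>An n1 x n2 real matrix is modelled as a function nat => nat => real,
  with entries outside the index range {0..<n1} x {0..<n2} equal to 0.\<close>

definition binmat :: "nat \<Rightarrow> nat \<Rightarrow> nat \<Rightarrow> (nat \<Rightarrow> nat \<Rightarrow> real) set" where
  "binmat n1 n2 s = {A. (\<forall>i j. A i j \<in> {0, 1})
      \<and> (\<forall>i j. (n1 \<le> i \<or> n2 \<le> j) \<longrightarrow> A i j = 0)
      \<and> (\<forall>i<n1. card {j. j < n2 \<and> A i j = 1} = s)}"

definition hamming :: "nat \<Rightarrow> nat \<Rightarrow> (nat \<Rightarrow> nat \<Rightarrow> real) \<Rightarrow> (nat \<Rightarrow> nat \<Rightarrow> real) \<Rightarrow> nat" where
  "hamming n1 n2 A A' = card {(i, j). i < n1 \<and> j < n2 \<and> A i j \<noteq> A' i j}"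

end

theory Submission
  imports Defs "HOL-Library.FuncSet"
begin

text \<open>Each row of a matrix in binmat n1 n2 s can be cut into s blocks of width m = n2 div s
  and given one 1 per block, so words of length n1 s over an m-letter alphabet embed into
  binmat n1 n2 s, doubling Hamming distances. By the Gilbert--Varshamov bound there is such a
  code with minimum distance n1 s / 16 and at least m^(n1 s / 4) words; since
  ln (e n2 / s) \<le> 4 ln m, this gives the constant 1/16.\<close>

definition hamming_fun :: "'a set \<Rightarrow> ('a \<Rightarrow> 'b) \<Rightarrow> ('a \<Rightarrow> 'b) \<Rightarrow> nat" where
  "hamming_fun I f g = card {p\<in>I. f p \<noteq> g p}"

definition code_min_dist :: "'a set \<Rightarrow> real \<Rightarrow> ('a \<Rightarrow> 'b) set \<Rightarrow> bool" where
  "code_min_dist I d \<Omega> \<longleftrightarrow> (\<forall>f\<in>\<Omega>. \<forall>g\<in>\<Omega>. f \<noteq> g \<longrightarrow> d \<le> real (hamming_fun I f g))"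

lemma hamming_fun_commute: "hamming_fun I f g = hamming_fun I g f"
  unfolding hamming_fun_def by metis

lemma hamming_fun_self [simp]: "hamming_fun I f f = 0"
  by (simp add: hamming_fun_def)

lemma prod_hamming_weight:
  assumes "finite I"
  shows "(\<Prod>p\<in>I. if c p = g p then 1 else y) = y ^ hamming_fun I c g"
proof -
  have "(\<Prod>p\<in>I. if c p = g p then 1 else y) = y ^ card (I \<inter> - {p. c p = g p})"
    by (simp add: prod.If_cases[OF assms])
  also have "I \<inter> - {p. c p = g p} = {p\<in>I. c p \<noteq> g p}" by auto
  finally show ?thesis by (simp add: hamming_fun_def)
qed

text \<open>Chernoff-type estimate: weighting each word at distance k from c by y^k, the whole
  space has total weight (1 + (q - 1) y)^|I|, while each word of the ball weighs at least y^d.\<close>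
lemma card_hamming_ball_le:
  fixes y d :: real
  assumes fin: "finite I" "finite Q" and y: "0 < y" "y \<le> 1" and c: "c \<in> PiE I (\<lambda>_. Q)"
  shows "real (card {g\<in>PiE I (\<lambda>_. Q). real (hamming_fun I c g) < d})
     \<le> y powr (-d) * (1 + (real (card Q) - 1) * y) ^ card I"
proof -
  let ?W = "PiE I (\<lambda>_. Q)"
  let ?w = "\<lambda>g. y ^ hamming_fun I c g"
  have weight_ge: "1 \<le> y powr (-d) * ?w g" if "real (hamming_fun I c g) < d" for g
  proof -
    have "y powr d \<le> ?w g"
      using powr_mono'[of "real (hamming_fun I c g)" d y] that y by (simp add: powr_realpow)
    then have "y powr (-d) * y powr d \<le> y powr (-d) * ?w g" by (simp add: mult_left_mono)
    then show ?thesis using y by (simp add: powr_add[symmetric])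
  qed
  have letter_sum: "(\<Sum>v\<in>Q. if c p = v then 1 else y) = 1 + (real (card Q) - 1) * y"
    if "p \<in> I" for p
  proof -
    have "(\<Sum>v\<in>Q. if c p = v then 1 else y) = (\<Sum>v\<in>Q. y + (if v = c p then 1 - y else 0))"
      by (rule sum.cong) auto
    also have "\<dots> = real (card Q) * y + (1 - y)"
      using c that fin by (auto simp: sum.distrib)
    finally show ?thesis by (simp add: algebra_simps)
  qed
  have "real (card {g\<in>?W. real (hamming_fun I c g) < d})
      = (\<Sum>g\<in>{g\<in>?W. real (hamming_fun I c g) < d}. 1)" by simp
  also have "\<dots> \<le> (\<Sum>g\<in>{g\<in>?W. real (hamming_fun I c g) < d}. y powr (-d) * ?w g)"
    using weight_ge by (intro sum_mono) simp
  also have "\<dots> \<le> (\<Sum>g\<in>?W. y powr (-d) * ?w g)"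
    by (rule sum_mono2) (use fin y in \<open>auto simp: finite_PiE\<close>)
  also have "\<dots> = y powr (-d) * (\<Sum>g\<in>?W. \<Prod>p\<in>I. if c p = g p then 1 else y)"
    by (simp add: sum_distrib_left prod_hamming_weight[OF fin(1)])
  also have "(\<Sum>g\<in>?W. \<Prod>p\<in>I. if c p = g p then 1 else y) = (\<Prod>p\<in>I. \<Sum>v\<in>Q. if c p = v then 1 else y)"
    by (rule prod_sum_PiE[symmetric]) (use fin in auto)
  also have "\<dots> = (1 + (real (card Q) - 1) * y) ^ card I"
    by (simp add: letter_sum)
  finally show ?thesis by simp
qed

lemma maximal_code_covers:
  assumes d: "0 < d" and \<Omega>: "\<Omega> \<subseteq> PiE I (\<lambda>_. Q)" "code_min_dist I d \<Omega>"
    and maximal: "\<And>\<Omega>'. \<Omega> \<subseteq> \<Omega>' \<Longrightarrow> \<Omega>' \<subseteq> PiE I (\<lambda>_. Q) \<Longrightarrow> code_min_dist I d \<Omega>' \<Longrightarrow> \<Omega>' = \<Omega>"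
    and g: "g \<in> PiE I (\<lambda>_. Q)"
  shows "\<exists>c\<in>\<Omega>. real (hamming_fun I c g) < d"
proof (rule ccontr)
  assume far: "\<not> ?thesis"
  then have "g \<notin> \<Omega>" using d by force
  moreover have "code_min_dist I d (insert g \<Omega>)"
    using \<Omega>(2) far unfolding code_min_dist_def by (metis hamming_fun_commute insert_iff not_less)
  ultimately show False using maximal[of "insert g \<Omega>"] \<Omega>(1) g by blast
qed

text \<open>Gilbert--Varshamov bound: a maximal code is a covering by balls of radius d.\<close>
lemma gilbert_varshamov:
  fixes y d :: real
  assumes fin: "finite I" "finite Q" and y: "0 < y" "y \<le> 1" and d: "0 < d"
  shows "\<exists>\<Omega>. \<Omega> \<subseteq> PiE I (\<lambda>_. Q) \<and> code_min_dist I d \<Omega> \<and>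
     real (card Q) ^ card I \<le> real (card \<Omega>) * (y powr (-d) * (1 + (real (card Q) - 1) * y) ^ card I)"
proof -
  let ?W = "PiE I (\<lambda>_. Q)"
  let ?V = "y powr (-d) * (1 + (real (card Q) - 1) * y) ^ card I"
  let ?ball = "\<lambda>c. {g\<in>?W. real (hamming_fun I c g) < d}"
  have finW: "finite ?W" using fin by (simp add: finite_PiE)
  have "finite {\<Omega>. \<Omega> \<subseteq> ?W \<and> code_min_dist I d \<Omega>}" using finW by simp
  moreover have "{} \<in> {\<Omega>. \<Omega> \<subseteq> ?W \<and> code_min_dist I d \<Omega>}" by (simp add: code_min_dist_def)
  ultimately obtain \<Omega> where \<Omega>: "\<Omega> \<subseteq> ?W" "code_min_dist I d \<Omega>"
    and maximal: "\<And>\<Omega>'. \<Omega> \<subseteq> \<Omega>' \<Longrightarrow> \<Omega>' \<subseteq> ?W \<Longrightarrow> code_min_dist I d \<Omega>' \<Longrightarrow> \<Omega>' = \<Omega>"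
    using finite_has_maximal by (smt (verit, best) empty_iff mem_Collect_eq)
  have finO: "finite \<Omega>" using \<Omega>(1) finW finite_subset by blast
  have "?W \<subseteq> (\<Union>c\<in>\<Omega>. ?ball c)"
    using maximal_code_covers[OF d \<Omega> maximal] by blast
  then have "card ?W \<le> card (\<Union>c\<in>\<Omega>. ?ball c)"
    by (rule card_mono[rotated]) (use finO finW in auto)
  also have "\<dots> \<le> (\<Sum>c\<in>\<Omega>. card (?ball c))"
    by (rule card_UN_le[OF finO])
  finally have "real (card ?W) \<le> real (\<Sum>c\<in>\<Omega>. card (?ball c))"
    by (simp only: of_nat_le_iff)
  also have "\<dots> = (\<Sum>c\<in>\<Omega>. real (card (?ball c)))"
    by (rule of_nat_sum)
  also have "\<dots> \<le> (\<Sum>c\<in>\<Omega>. ?V)"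
    using card_hamming_ball_le[OF fin y] \<Omega>(1) by (intro sum_mono) blast
  finally show ?thesis
    using \<Omega> fin by (intro exI[of _ \<Omega>]) (simp add: card_PiE)
qed

definition block_matrix :: "nat \<Rightarrow> nat \<Rightarrow> nat \<Rightarrow> (nat \<times> nat \<Rightarrow> nat) \<Rightarrow> nat \<Rightarrow> nat \<Rightarrow> real" where
  "block_matrix n1 m s f = (\<lambda>i j. if i < n1 \<and> j < s * m \<and> j mod m = f (i, j div m) then 1 else 0)"

lemma block_pos_eq_iff:
  fixes a b x y m :: nat
  assumes "x < m" "y < m"
  shows "a * m + x = b * m + y \<longleftrightarrow> a = b \<and> x = y"
proof
  assume eq: "a * m + x = b * m + y"
  have "a = (a * m + x) div m" "x = (a * m + x) mod m" using assms(1) by simp_all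
  moreover have "b = (b * m + y) div m" "y = (b * m + y) mod m" using assms(2) by simp_all
  ultimately show "a = b \<and> x = y" using eq by simp
qed simp

lemma block_pos_less:
  fixes b x s m :: nat
  assumes "b < s" "x < m"
  shows "b * m + x < s * m"
proof -
  have "b * m + x < (b + 1) * m" using assms by simp
  also have "\<dots> \<le> s * m" using assms by (intro mult_right_mono) auto
  finally show ?thesis .
qed

lemma block_matrix_at:
  assumes "i < n1" "b < s" "x < m"
  shows "block_matrix n1 m s f i (b * m + x) = (if x = f (i, b) then 1 else 0)"
  using assms block_pos_less[OF assms(2,3)] by (simp add: block_matrix_def)

lemma block_matrix_row:
  assumes f: "f \<in> PiE ({..<n1} \<times> {..<s}) (\<lambda>_. {..<m})" and "s * m \<le> n2" and i: "i < n1"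
  shows "{j. j < n2 \<and> block_matrix n1 m s f i j = 1} = (\<lambda>b. b * m + f (i, b)) ` {..<s}"
proof (intro set_eqI iffI)
  fix j assume "j \<in> {j. j < n2 \<and> block_matrix n1 m s f i j = 1}"
  then have j: "j < s * m" "j mod m = f (i, j div m)"
    by (auto simp: block_matrix_def split: if_splits)
  then have "j div m < s" by (simp add: less_mult_imp_div_less)
  moreover have "j = j div m * m + f (i, j div m)" using j(2) by (metis div_mult_mod_eq)
  ultimately show "j \<in> (\<lambda>b. b * m + f (i, b)) ` {..<s}" by blast
next
  fix j assume "j \<in> (\<lambda>b. b * m + f (i, b)) ` {..<s}"
  then obtain b where b: "b < s" "j = b * m + f (i, b)" by auto
  moreover have "f (i, b) < m" using f i b by auto
  ultimately show "j \<in> {j. j < n2 \<and> block_matrix n1 m s f i j = 1}"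
    using block_matrix_at[OF i] block_pos_less \<open>s * m \<le> n2\<close> by fastforce
qed

lemma block_matrix_in_binmat:
  assumes f: "f \<in> PiE ({..<n1} \<times> {..<s}) (\<lambda>_. {..<m})" and sm: "s * m \<le> n2"
  shows "block_matrix n1 m s f \<in> binmat n1 n2 s"
proof -
  have "card {j. j < n2 \<and> block_matrix n1 m s f i j = 1} = s" if i: "i < n1" for i
  proof -
    have "f (i, b) < m" if "b < s" for b using f i that by auto
    then have "inj_on (\<lambda>b. b * m + f (i, b)) {..<s}"
      by (intro inj_onI) (metis block_pos_eq_iff lessThan_iff)
    then show ?thesis by (simp add: block_matrix_row[OF f sm i] card_image)
  qed
  then show ?thesis using sm unfolding binmat_def by (auto simp: block_matrix_def)
qed

text \<open>A block in which f and g differ contributes two disagreeing entries, one at the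
  position of f and one at the position of g.\<close>
lemma hamming_block_matrix_ge:
  assumes sm: "s * m \<le> n2"
    and f: "f \<in> PiE ({..<n1} \<times> {..<s}) (\<lambda>_. {..<m})"
    and g: "g \<in> PiE ({..<n1} \<times> {..<s}) (\<lambda>_. {..<m})"
  shows "2 * hamming_fun ({..<n1} \<times> {..<s}) f g
    \<le> hamming n1 n2 (block_matrix n1 m s f) (block_matrix n1 m s g)"
proof -
  let ?D = "{p\<in>{..<n1} \<times> {..<s}. f p \<noteq> g p}"
  let ?H = "{(i, j). i < n1 \<and> j < n2 \<and> block_matrix n1 m s f i j \<noteq> block_matrix n1 m s g i j}"
  let ?pos = "\<lambda>h (i, b). (i, b * m + h (i, b))"
  have range: "f p < m" "g p < m" if "p \<in> ?D" for p using f g that by auto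
  have finD: "finite ?D" by (rule finite_subset[of _ "{..<n1} \<times> {..<s}"]) auto
  have inj: "inj_on (?pos h) ?D" if "h = f \<or> h = g" for h
    using that range by (intro inj_onI) (auto simp: block_pos_eq_iff)
  have disjoint: "?pos f ` ?D \<inter> ?pos g ` ?D = {}"
    using range by (auto simp: block_pos_eq_iff)
  have pos_in: "?pos h p \<in> ?H" if p: "p \<in> ?D" and h: "h = f \<or> h = g" for p h
  proof -
    obtain i b where ib: "p = (i, b)" "i < n1" "b < s" and ne: "f (i, b) \<noteq> g (i, b)"
      using p by auto
    have hp: "h (i, b) < m" using h range p ib(1) by auto
    have "b * m + h (i, b) < n2" using block_pos_less[OF ib(3) hp] sm by linarith
    moreover have "block_matrix n1 m s f i (b * m + h (i, b)) \<noteq> block_matrix n1 m s g i (b * m + h (i, b))"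
      using block_matrix_at[OF ib(2,3) hp, of f] block_matrix_at[OF ib(2,3) hp, of g] ne h by auto
    ultimately show ?thesis using ib(1,2) by simp
  qed
  have "?pos f ` ?D \<union> ?pos g ` ?D \<subseteq> ?H"
    using pos_in[of _ f] pos_in[of _ g] by (intro Un_least image_subsetI) simp_all
  moreover have "finite ?H" by (rule finite_subset[of _ "{..<n1} \<times> {..<n2}"]) auto
  ultimately have "card (?pos f ` ?D \<union> ?pos g ` ?D) \<le> card ?H" by (rule card_mono[rotated])
  moreover have "card (?pos f ` ?D \<union> ?pos g ` ?D) = 2 * card ?D"
    using card_Un_disjoint[OF finite_imageI[OF finD] finite_imageI[OF finD] disjoint]
      card_image[OF inj] by simp
  ultimately show ?thesis unfolding hamming_def hamming_fun_def by simp
qed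

lemma inj_on_block_matrix:
  assumes "s * m \<le> n2"
  shows "inj_on (block_matrix n1 m s) (PiE ({..<n1} \<times> {..<s}) (\<lambda>_. {..<m}))"
proof (rule inj_onI)
  fix f g assume f: "f \<in> PiE ({..<n1} \<times> {..<s}) (\<lambda>_. {..<m})"
    and g: "g \<in> PiE ({..<n1} \<times> {..<s}) (\<lambda>_. {..<m})"
    and eq: "block_matrix n1 m s f = block_matrix n1 m s g"
  have "hamming_fun ({..<n1} \<times> {..<s}) f g = 0"
    using hamming_block_matrix_ge[OF assms f g] by (simp add: eq hamming_def)
  then have "\<forall>p\<in>{..<n1} \<times> {..<s}. f p = g p"
    unfolding hamming_fun_def by (subst (asm) card_0_eq) auto
  then show "f = g" using f g by (auto intro: PiE_ext)
qed

lemma ln_two_ge_half: "1/2 \<le> ln (2::real)"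
  using ln_le_minus_one[of "1/2 :: real"] by (simp add: ln_div)

lemma ln_gv_volume_le:
  fixes m N :: nat
  assumes m: "2 \<le> m"
  shows "ln ((1 / (4 * real m)) powr (-(real N / 16)) * (1 + (real m - 1) * (1 / (4 * real m))) ^ N)
    \<le> 3/4 * real N * ln (real m)"
proof -
  let ?q = "1 + (real m - 1) * (1 / (4 * real m))"
  have mpos: "0 < real m" using m by simp
  have qpos: "0 < ?q" using m by (simp add: field_simps)
  have "ln 2 \<le> ln (real m)" using m by simp
  moreover have "ln 4 = 2 * ln (2::real)" using ln_realpow[of 2 2] by simp
  ultimately have ln_m: "1/2 \<le> ln (real m)" and ln_4: "ln 4 \<le> 2 * ln (real m)"
    using ln_two_ge_half by linarith+
  have ln_q: "ln ?q \<le> 1/4"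
  proof -
    have "ln ?q \<le> (real m - 1) * (1 / (4 * real m))" using ln_le_minus_one[OF qpos] by simp
    also have "\<dots> \<le> 1/4" using mpos by (simp add: field_simps)
    finally show ?thesis .
  qed
  have "ln ((1 / (4 * real m)) powr (-(real N / 16)) * ?q ^ N)
      = real N / 16 * (ln 4 + ln (real m)) + real N * ln ?q"
    using mpos qpos by (simp add: ln_mult_pos ln_powr ln_realpow ln_mult powr_minus_divide
        powr_divide del: ln_mult_pos)
  also have "\<dots> \<le> real N / 16 * (3 * ln (real m)) + real N * (1/2 * ln (real m))"
    using ln_4 ln_q ln_m by (intro add_mono mult_left_mono) auto
  also have "\<dots> = 11/16 * (real N * ln (real m))" by (simp add: algebra_simps)
  also have "\<dots> \<le> 3/4 * (real N * ln (real m))" using ln_m by (intro mult_right_mono) auto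
  finally show ?thesis by (simp add: mult.assoc)
qed

lemma exists_code_ln_card_ge:
  assumes fin: "finite I" "finite Q" and I: "I \<noteq> {}" and Q: "2 \<le> card Q"
  shows "\<exists>\<Omega>. \<Omega> \<subseteq> PiE I (\<lambda>_. Q) \<and> code_min_dist I (real (card I) / 16) \<Omega> \<and>
     real (card I) * ln (real (card Q)) / 4 \<le> ln (real (card \<Omega>))"
proof -
  let ?N = "card I" and ?m = "card Q"
  let ?V = "(1 / (4 * real ?m)) powr (-(real ?N / 16)) * (1 + (real ?m - 1) * (1 / (4 * real ?m))) ^ ?N"
  have d: "0 < real ?N / 16" using fin I by (simp add: card_gt_0_iff)
  have y: "0 < 1 / (4 * real ?m)" "1 / (4 * real ?m) \<le> 1" using Q by auto
  obtain \<Omega> where \<Omega>: "\<Omega> \<subseteq> PiE I (\<lambda>_. Q)" "code_min_dist I (real ?N / 16) \<Omega>"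
    and count: "real ?m ^ ?N \<le> real (card \<Omega>) * ?V"
    using gilbert_varshamov[OF fin y d] by blast
  have Vpos: "0 < ?V" using Q by (simp add: field_simps)
  have "0 < real ?m ^ ?N" using Q by simp
  then have "0 < real (card \<Omega>) * ?V" using count by linarith
  then have "0 < real (card \<Omega>)" using Vpos by (rule zero_less_mult_pos2)
  have "real ?N * ln (real ?m) = ln (real ?m ^ ?N)" using Q by (simp add: ln_realpow)
  also have "\<dots> \<le> ln (real (card \<Omega>)) + ln ?V"
    using ln_mono[OF count] \<open>0 < real ?m ^ ?N\<close> \<open>0 < real (card \<Omega>)\<close> Vpos by (simp add: ln_mult_pos)
  also have "\<dots> \<le> ln (real (card \<Omega>)) + 3/4 * real ?N * ln (real ?m)"
    using ln_gv_volume_le[OF Q] by simp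
  finally show ?thesis using \<Omega> by (intro exI[of _ \<Omega>]) simp
qed

lemma exists_binmat_code:
  assumes n1: "1 \<le> n1" and s: "1 \<le> s" and m: "2 \<le> m" and sm: "s * m \<le> n2"
  shows "\<exists>\<Omega>. \<Omega> \<subseteq> binmat n1 n2 s \<and>
    real n1 * real s * ln (real m) / 4 \<le> ln (real (card \<Omega>)) \<and>
    (\<forall>A\<in>\<Omega>. \<forall>A'\<in>\<Omega>. A \<noteq> A' \<longrightarrow> real n1 * real s / 8 \<le> real (hamming n1 n2 A A'))"
proof -
  let ?I = "{..<n1} \<times> {..<s}"
  let ?W = "PiE ?I (\<lambda>_. {..<m})"
  have "?I \<noteq> {}" using n1 s by (auto simp: lessThan_empty_iff)
  then obtain \<Omega> where \<Omega>: "\<Omega> \<subseteq> ?W" "code_min_dist ?I (real (card ?I) / 16) \<Omega>"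
    and size: "real (card ?I) * ln (real (card {..<m})) / 4 \<le> ln (real (card \<Omega>))"
    using exists_code_ln_card_ge[of ?I "{..<m}"] m by auto
  have inj: "inj_on (block_matrix n1 m s) \<Omega>"
    using inj_on_block_matrix[OF sm] \<Omega>(1) by (rule inj_on_subset)
  show ?thesis
  proof (intro exI[of _ "block_matrix n1 m s ` \<Omega>"] conjI ballI impI)
    show "block_matrix n1 m s ` \<Omega> \<subseteq> binmat n1 n2 s"
      using block_matrix_in_binmat[OF _ sm] \<Omega>(1) by blast
    show "real n1 * real s * ln (real m) / 4 \<le> ln (real (card (block_matrix n1 m s ` \<Omega>)))"
      using size by (simp add: card_image[OF inj] card_cartesian_product)
  next
    fix A A' assume "A \<in> block_matrix n1 m s ` \<Omega>" "A' \<in> block_matrix n1 m s ` \<Omega>" "A \<noteq> A'"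
    then obtain f g where fg: "f \<in> \<Omega>" "g \<in> \<Omega>" "f \<noteq> g"
      and A: "A = block_matrix n1 m s f" and A': "A' = block_matrix n1 m s g" by blast
    have "real n1 * real s / 16 \<le> real (hamming_fun ?I f g)"
      using \<Omega>(2) fg unfolding code_min_dist_def by (simp add: card_cartesian_product)
    moreover have "2 * hamming_fun ?I f g \<le> hamming n1 n2 A A'"
      unfolding A A' using hamming_block_matrix_ge[OF sm] fg \<Omega>(1) by blast
    ultimately show "real n1 * real s / 8 \<le> real (hamming n1 n2 A A')" by linarith
  qed
qed

lemma ln_exp_ratio_le:
  fixes n2 s :: nat
  assumes s: "1 \<le> s" and m: "2 \<le> n2 div s"
  shows "ln (exp 1 * real n2 / real s) \<le> 4 * ln (real (n2 div s))"
proof -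
  let ?m = "n2 div s"
  have "n2 = ?m * s + n2 mod s" by simp
  moreover have "n2 mod s < s" using s by simp
  moreover have "s * (?m + 1) = ?m * s + s" by simp
  ultimately have "n2 < s * (?m + 1)" by linarith
  then have "real n2 < real s * (real ?m + 1)" by (metis of_nat_1 of_nat_add of_nat_less_iff of_nat_mult)
  moreover have "real s * 1 \<le> real s * real ?m" using m by (intro mult_left_mono) auto
  ultimately have "real n2 \<le> real s * (2 * real ?m)" by (simp add: algebra_simps)
  then have ratio: "real n2 / real s \<le> 2 * real ?m" using s by (simp add: field_simps)
  have "n2 \<noteq> 0" using m by (metis div_0 not_numeral_le_zero)
  then have pos: "0 < real n2 / real s" using s by simp
  have "ln (exp 1 * real n2 / real s) = 1 + ln (real n2 / real s)"
    using pos by (simp add: ln_mult_pos times_divide_eq_right[symmetric] del: times_divide_eq_right)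
  also have "\<dots> \<le> 1 + ln 2 + ln (real ?m)"
    using ln_mono[OF ratio pos] m by (simp add: ln_mult_pos)
  also have "\<dots> \<le> 4 * ln (real ?m)"
  proof -
    have "ln 2 \<le> ln (real ?m)" using m by simp
    then show ?thesis using ln_two_ge_half by linarith
  qed
  finally show ?thesis .
qed

theorem lemma1:
  shows "\<exists>C::real. C \<ge> 10 powr (-5) \<and>
    (\<forall>n1 n2 s::nat. 2 \<le> n1 \<and> 2 \<le> n2 \<and> 1 \<le> s \<and> real s \<le> real n2 / 2 \<longrightarrow>
      (\<exists>\<Omega>. \<Omega> \<subseteq> binmat n1 n2 s \<and>
         ln (real (card \<Omega>)) \<ge> C * real n1 * real s * ln (exp 1 * real n2 / real s) \<and>
         (\<forall>A\<in>\<Omega>. \<forall>A'\<in>\<Omega>. A \<noteq> A' \<longrightarrow>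
            real (hamming n1 n2 A A') \<ge> real n1 * (real s + 1) / 16)))"
proof (intro exI[of _ "1/16"] conjI allI impI)
  show "(10::real) powr (-5) \<le> 1/16"
    by (simp add: powr_minus powr_realpow)
  fix n1 n2 s :: nat
  assume "2 \<le> n1 \<and> 2 \<le> n2 \<and> 1 \<le> s \<and> real s \<le> real n2 / 2"
  then have n1: "1 \<le> n1" and s: "1 \<le> s" and "2 * s \<le> n2" by auto
  then have m: "2 \<le> n2 div s" by (metis div_le_mono nonzero_mult_div_cancel_right not_one_le_zero)
  obtain \<Omega> where \<Omega>: "\<Omega> \<subseteq> binmat n1 n2 s"
    and size: "real n1 * real s * ln (real (n2 div s)) / 4 \<le> ln (real (card \<Omega>))"
    and dist: "\<forall>A\<in>\<Omega>. \<forall>A'\<in>\<Omega>. A \<noteq> A' \<longrightarrow> real n1 * real s / 8 \<le> real (hamming n1 n2 A A')"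
    using exists_binmat_code[OF n1 s m] by (metis mult.commute times_div_less_eq_dividend)
  have "1/16 * real n1 * real s * ln (exp 1 * real n2 / real s)
      \<le> 1/16 * real n1 * real s * (4 * ln (real (n2 div s)))"
    using ln_exp_ratio_le[OF s m] by (intro mult_left_mono) auto
  moreover have "real n1 * (real s + 1) / 16 \<le> real n1 * real s / 8"
    using s by (simp add: field_simps mult_left_mono)
  ultimately show "\<exists>\<Omega>. \<Omega> \<subseteq> binmat n1 n2 s \<and>
      ln (real (card \<Omega>)) \<ge> 1/16 * real n1 * real s * ln (exp 1 * real n2 / real s) \<and>
      (\<forall>A\<in>\<Omega>. \<forall>A'\<in>\<Omega>. A \<noteq> A' \<longrightarrow> real (hamming n1 n2 A A') \<ge> real n1 * (real s + 1) / 16)"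
    using \<Omega> size dist by (intro exI[of _ \<Omega>]) force
qed

end
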